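(* Let $G$ be a finite solvable group and $M$ a maximal subgroup of $G$. If $M$ is exponential in $G$, then $M \lhd G$.
   Context: A subgroup $H$ of finite index in a group $G$ is called exponential in $G$ if $x^{|G:H|} \in H$ for every $x \in G$. *)

theory Defs
  imports "HOL-Algebra.Algebra"
begin

definition maximal_subgroup :: "('a, 'b) monoid_scheme \<Rightarrow> 'a set \<Rightarrow> bool" where
  "maximal_subgroup G M \<longleftrightarrow> subgroup M G \<and> M \<noteq> carrier G \<and>
     (\<forall>H. subgroup H G \<and> M \<subseteq> H \<longrightarrow> H = M \<or> H = carrier G)"

definition exponential_subgroup :: "('a, 'b) monoid_scheme \<Rightarrow> 'a set \<Rightarrow> bool" where
  "exponential_subgroup G H \<longleftrightarrow> subgroup H G \<and> finite (rcosets\<^bsub>G\<^esub> H) \<and>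
     (\<forall>x\<in>carrier G. x [^]\<^bsub>G\<^esub> card (rcosets\<^bsub>G\<^esub> H) \<in> H)"

end

theory Submission
  imports Defs
begin

text \<open>
  Let A be minimal among the normal subgroups of G not contained in M. Solvability forces
  the derived subgroup of A into M, so G = AM, B = A \<inter> M is normal, A/B is abelian and
  |G:M| = |A:B|. Minimality of A makes A/B of exponent p for a prime p dividing |G:M|, so
  |G:M| is a power of p. Exponentiality of M means that every |G:M|-th power acts trivially
  on A/B by conjugation, hence all orbits of G on A/B have p-power length; counting fixed
  points modulo p produces a nontrivial coset of B in A that is central in G/B, and
  minimality again gives [G,A] \<subseteq> B \<subseteq> M. Thus A normalizes M and M is normal in AM = G.
\<close>

lemma (in group) inv_mult_cancel_left [simp]:
  "x \<in> carrier G \<Longrightarrow> y \<in> carrier G \<Longrightarrow> inv x \<otimes> (x \<otimes> y) = y"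
  by (simp add: m_assoc [symmetric])

lemma (in group) mult_inv_cancel_left [simp]:
  "x \<in> carrier G \<Longrightarrow> y \<in> carrier G \<Longrightarrow> x \<otimes> (inv x \<otimes> y) = y"
  by (simp add: m_assoc [symmetric])

lemma (in group) rcos_eq_iff:
  assumes "subgroup H G" "x \<in> carrier G" "y \<in> carrier G"
  shows "H #> x = H #> y \<longleftrightarrow> x \<otimes> inv y \<in> H"
  using assms subgroup.rcos_module[OF assms(1) is_group assms(3,2)]
    repr_independence repr_independenceD by blast

lemma (in group) subgroup_nat_pow_closed:
  assumes "subgroup H G" "x \<in> H"
  shows "x [^] (n::nat) \<in> H"
  using subgroup_int_pow_closed[OF assms, of "int n"] assms subgroup.mem_carrier
  by (metis int_pow_int)

lemma (in group) conj_nat_pow: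
  assumes "g \<in> carrier G" "x \<in> carrier G"
  shows "(g \<otimes> x \<otimes> inv g) [^] (n::nat) = g \<otimes> x [^] n \<otimes> inv g"
proof (induction n)
  case (Suc n)
  then show ?case using assms by (simp add: m_assoc)
qed (use assms in simp)

lemma (in group) mem_subgroup_if_coprime_pows:
  assumes "subgroup H G" "x \<in> carrier G" "x [^] (q::nat) \<in> H" "x [^] (n::nat) \<in> H" "coprime q n"
  shows "x \<in> H"
proof -
  obtain u v :: int where uv: "u * int q + v * int n = 1"
    using bezout_int[of "int q" "int n"] \<open>coprime q n\<close> by auto
  have "x = (x [^] q) [^] u \<otimes> (x [^] n) [^] v"
    using assms(2) uv by (simp add: int_pow_int[symmetric] int_pow_pow int_pow_mult[symmetric] mult.commute)
  then show ?thesis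
    using assms subgroup_int_pow_closed subgroup.m_closed by metis
qed

lemma (in group) nat_pow_prime_power_step:
  assumes "subgroup H G" "x \<in> carrier G" "x \<notin> H" "x [^] ((q::nat) ^ e) \<in> H"
  shows "\<exists>i. x [^] (q ^ i) \<notin> H \<and> (x [^] (q ^ i)) [^] q \<in> H"
  using assms(4)
proof (induction e)
  case 0
  then show ?case using assms(2,3) by simp
next
  case (Suc e)
  show ?case
  proof (cases "x [^] (q ^ e) \<in> H")
    case True
    then show ?thesis by (rule Suc.IH)
  next
    case False
    moreover have "(x [^] (q ^ e)) [^] q \<in> H"
      using Suc.prems assms(2) by (simp add: nat_pow_pow mult.commute)
    ultimately show ?thesis by blast
  qed
qed

lemma (in group) exists_prime_power_order_elem_outside:
  assumes fin: "finite (carrier G)" and K: "subgroup K G" and H: "subgroup H G" and "H \<subseteq> K"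
    and q: "Factorial_Ring.prime q" and q_dvd: "q dvd card ((\<lambda>a. H #> a) ` K)"
  obtains x e where "x \<in> K" "x \<notin> H" "x [^] (q ^ e) = \<one>"
proof -
  interpret K: group "G\<lparr>carrier := K\<rparr>"
    using K by (rule subgroup_imp_group)
  have finK: "finite K"
    using finite_subset[OF subgroup.subset[OF K] fin] .
  have "card ((\<lambda>a. H #> a) ` K) * card H = card K"
    using K.lagrange[OF subgroup_incl[OF H K \<open>H \<subseteq> K\<close>]]
    by (simp add: order_def RCOSETS_def r_coset_def UNION_singleton_eq_range)
  moreover obtain s where "card ((\<lambda>a. H #> a) ` K) = q * s"
    using q_dvd by (rule dvdE)
  ultimately have card_K: "card K = q * (s * card H)"
    by (simp add: mult.assoc)
  have "card K \<noteq> 0"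
    using finK subgroup.one_closed[OF K] by auto
  then obtain e r where e_r: "card K = q ^ e * r" "\<not> q dvd r"
    using multiplicity_decompose'[of "card K" q] q not_prime_unit by blast
  have "order (G\<lparr>carrier := K\<rparr>) = q ^ e * r"
    using e_r(1) by (simp add: order_def)
  then obtain Q where Q: "subgroup Q (G\<lparr>carrier := K\<rparr>)" "card Q = q ^ e"
    using sylow_thm[OF q K.is_group] finK by auto
  have QK: "Q \<subseteq> K" and QG: "subgroup Q G"
    using Q(1) K incl_subgroup subgroup.subset by fastforce+
  have "\<not> Q \<subseteq> H"
  proof
    assume "Q \<subseteq> H"
    interpret H: group "G\<lparr>carrier := H\<rparr>"
      using H by (rule subgroup_imp_group)
    have "card Q dvd card H"
      using H.lagrange[OF subgroup_incl[OF QG H \<open>Q \<subseteq> H\<close>]]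
      by (simp add: order_def) (metis dvd_triv_right)
    then obtain t where "card H = q ^ e * t"
      using Q(2) by (auto elim: dvdE)
    then have "q ^ e * r = q ^ e * (q * s * t)"
      using card_K e_r(1) by (simp add: ac_simps)
    then have "r = q * s * t"
      using q by (simp add: prime_gt_0_nat)
    then show False
      using e_r(2) by simp
  qed
  then obtain x where x: "x \<in> Q" "x \<notin> H"
    by blast
  interpret Q: group "G\<lparr>carrier := Q\<rparr>"
    using QG by (rule subgroup_imp_group)
  have "x [^] (q ^ e) = \<one>"
    using Q.pow_order_eq_1[of x] x(1) Q(2)
    by (simp add: order_def nat_pow_consistent[symmetric])
  then show ?thesis
    using that x QK by blast
qed

lemma (in group) exists_nat_pow_prime_mem:
  assumes fin: "finite (carrier G)" and K: "subgroup K G" and H: "subgroup H G" and "H \<subseteq> K"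
    and q: "Factorial_Ring.prime q" and q_dvd: "q dvd card ((\<lambda>a. H #> a) ` K)"
  shows "\<exists>x\<in>K. x \<notin> H \<and> x [^] q \<in> H"
proof -
  obtain x e where x: "x \<in> K" "x \<notin> H" "x [^] (q ^ e) = \<one>"
    using exists_prime_power_order_elem_outside[OF assms] .
  have "x \<in> carrier G"
    using x(1) subgroup.subset[OF K] by blast
  then obtain i where "x [^] (q ^ i) \<notin> H" "(x [^] (q ^ i)) [^] q \<in> H"
    using nat_pow_prime_power_step[OF H _ x(2)] x(3) subgroup.one_closed[OF H] by metis
  moreover have "x [^] (q ^ i) \<in> K"
    using subgroup_nat_pow_closed[OF K x(1)] .
  ultimately show ?thesis
    by blast
qed

lemma (in group) prime_dvd_index_dvd_exponent:
  assumes "finite (carrier G)" "subgroup K G" "subgroup H G" "H \<subseteq> K"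
    and pow_mem: "\<And>x. x \<in> K \<Longrightarrow> x [^] n \<in> H"
    and q: "Factorial_Ring.prime q" "q dvd card ((\<lambda>a. H #> a) ` K)"
  shows "q dvd (n::nat)"
proof (rule ccontr)
  assume "\<not> q dvd n"
  then have "coprime q n"
    using q(1) prime_imp_coprime by blast
  obtain x where "x \<in> K" "x \<notin> H" "x [^] q \<in> H"
    using exists_nat_pow_prime_mem[OF assms(1-4) q] by blast
  then show False
    using mem_subgroup_if_coprime_pows[OF \<open>subgroup H G\<close> _ _ pow_mem \<open>coprime q n\<close>]
      subgroup.mem_carrier[OF \<open>subgroup K G\<close>] by blast
qed

lemma (in group_action) orbit_eq_if_mem:
  assumes "x \<in> E" "y \<in> orbit G \<phi> x"
  shows "orbit G \<phi> y = orbit G \<phi> x"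
proof -
  have "y \<in> E"
    using assms element_image unfolding orbit_def by blast
  have "z \<in> E" if "z \<in> orbit G \<phi> x \<or> z \<in> orbit G \<phi> y" for z
    using that assms \<open>y \<in> E\<close> element_image unfolding orbit_def by blast
  then show ?thesis
    using assms \<open>y \<in> E\<close> orbit_sym orbit_trans by blast
qed

lemma (in group_action) card_fixed_points_mod:
  assumes "finite Y" "Y \<subseteq> E"
    and invariant: "\<And>x. x \<in> Y \<Longrightarrow> orbit G \<phi> x \<subseteq> Y"
    and orbit_size: "\<And>x. x \<in> Y \<Longrightarrow> card (orbit G \<phi> x) = 1 \<or> p dvd card (orbit G \<phi> x)"
  shows "card {x \<in> Y. card (orbit G \<phi> x) = 1} mod p = card Y mod p"
proof -
  define F where "F = {x \<in> Y. card (orbit G \<phi> x) = 1}"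
  define R where "R = Y - F"
  have orbit_R: "orbit G \<phi> x \<subseteq> R" if "x \<in> R" for x
    using that invariant orbit_eq_if_mem \<open>Y \<subseteq> E\<close> unfolding R_def F_def by fastforce
  have R_eq: "R = \<Union> (orbit G \<phi> ` R)"
    using orbit_R orbit_refl \<open>Y \<subseteq> E\<close> unfolding R_def by blast
  have "finite R"
    using \<open>finite Y\<close> R_def by simp
  have "pairwise disjnt (orbit G \<phi> ` R)"
  proof (rule pairwiseI)
    fix orb1 orb2 assume "orb1 \<in> orbit G \<phi> ` R" "orb2 \<in> orbit G \<phi> ` R" "orb1 \<noteq> orb2"
    moreover have "orbit G \<phi> ` R \<subseteq> orbits G E \<phi>"
      using \<open>Y \<subseteq> E\<close> unfolding R_def orbits_def by blast
    ultimately show "disjnt orb1 orb2"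
      using disjoint_union unfolding disjnt_def by blast
  qed
  then have "card R = (\<Sum>orb\<in>orbit G \<phi> ` R. card orb)"
    using card_Union_disjoint[of "orbit G \<phi> ` R"] R_eq \<open>finite R\<close> orbit_R
    by (metis finite_imageI finite_subset imageE)
  moreover have "p dvd card orb" if "orb \<in> orbit G \<phi> ` R" for orb
    using that orbit_size unfolding R_def F_def by blast
  ultimately have "p dvd card R"
    by (simp add: dvd_sum)
  moreover have "card Y = card F + card R"
    using \<open>finite Y\<close> card_Diff_subset[of F Y] card_mono[of Y F] unfolding R_def F_def by fastforce
  ultimately show ?thesis
    unfolding F_def by (auto elim: dvdE)
qed

lemma (in group) prime_dvd_card_orbit_dvd:
  assumes fin: "finite (carrier G)" and act: "group_action G E \<phi>" and "x \<in> E"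
    and pow_fixes: "\<And>g. g \<in> carrier G \<Longrightarrow> \<phi> (g [^] n) x = x"
    and q: "Factorial_Ring.prime q" "q dvd card (orbit G \<phi> x)"
  shows "q dvd (n::nat)"
proof -
  define S where "S = stabilizer G \<phi> x"
  have S: "subgroup S G"
    using group_action.stabilizer_subgroup[OF act \<open>x \<in> E\<close>] S_def by simp
  have "card (orbit G \<phi> x) = card ((\<lambda>a. S #> a) ` carrier G)"
    using group_action.orbit_stab_fun_is_bij[OF act \<open>x \<in> E\<close>] bij_betw_same_card
    unfolding S_def RCOSETS_def UNION_singleton_eq_range by metis
  moreover have "g [^] n \<in> S" if "g \<in> carrier G" for g
    using that pow_fixes unfolding S_def stabilizer_def by simp
  ultimately show ?thesis
    using prime_dvd_index_dvd_exponent[OF fin subgroup_self S subgroup.subset[OF S] _ q(1)] q(2)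
    by simp
qed

definition subset_conj :: "('a, 'b) monoid_scheme \<Rightarrow> 'a \<Rightarrow> 'a set \<Rightarrow> 'a set" where
  "subset_conj G = (\<lambda>g. \<lambda>S\<in>{S. S \<subseteq> carrier G}. g <#\<^bsub>G\<^esub> S #>\<^bsub>G\<^esub> inv\<^bsub>G\<^esub> g)"

lemma (in group) group_action_subset_conj: "group_action G {S. S \<subseteq> carrier G} (subset_conj G)"
  unfolding subset_conj_def by (rule action_by_conjugation_on_power_set)

lemma (in normal) subset_conj_rcos:
  assumes "g \<in> carrier G" "a \<in> carrier G"
  shows "subset_conj G g (H #> a) = H #> (g \<otimes> a \<otimes> inv g)"
proof -
  have "g <# (H #> a) = (g <# H) #> a"
    using assms subset by (simp add: coset_assoc)
  also have "\<dots> = (H #> g) #> a"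
    using assms coset_eq by simp
  finally show ?thesis
    using assms subset r_coset_subset_G by (simp add: subset_conj_def coset_mult_assoc)
qed

lemma (in normal) orbit_subset_conj_rcos:
  assumes "a \<in> carrier G"
  shows "orbit G (subset_conj G) (H #> a) = (\<lambda>g. H #> (g \<otimes> a \<otimes> inv g)) ` carrier G"
proof -
  have "orbit G (subset_conj G) (H #> a) = (\<lambda>g. subset_conj G g (H #> a)) ` carrier G"
    unfolding orbit_def by blast
  also have "\<dots> = (\<lambda>g. H #> (g \<otimes> a \<otimes> inv g)) ` carrier G"
    using assms subset_conj_rcos by (intro image_cong) auto
  finally show ?thesis .
qed

lemma (in normal) card_orbit_subset_conj_rcos_eq_1_iff:
  assumes "a \<in> carrier G"
  shows "card (orbit G (subset_conj G) (H #> a)) = 1 \<longleftrightarrow>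
           (\<forall>g\<in>carrier G. g \<otimes> a \<otimes> inv g \<otimes> inv a \<in> H)"
proof -
  define Orb where "Orb = orbit G (subset_conj G) (H #> a)"
  have Orb: "Orb = (\<lambda>g. H #> (g \<otimes> a \<otimes> inv g)) ` carrier G"
    unfolding Orb_def using orbit_subset_conj_rcos[OF assms] .
  have "H #> (\<one> \<otimes> a \<otimes> inv \<one>) \<in> Orb"
    unfolding Orb by (rule imageI) simp
  then have mem: "H #> a \<in> Orb"
    using assms by simp
  have "card Orb = 1 \<longleftrightarrow> Orb = {H #> a}"
  proof
    assume "card Orb = 1"
    then obtain x where "Orb = {x}"
      by (rule card_1_singletonE)
    then show "Orb = {H #> a}"
      using mem by simp
  qed simp
  also have "\<dots> \<longleftrightarrow> (\<forall>g\<in>carrier G. H #> (g \<otimes> a \<otimes> inv g) = H #> a)"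
    using mem unfolding Orb by blast
  also have "\<dots> \<longleftrightarrow> (\<forall>g\<in>carrier G. g \<otimes> a \<otimes> inv g \<otimes> inv a \<in> H)"
    using rcos_eq_iff[OF subgroup_axioms] assms by simp
  finally show ?thesis
    unfolding Orb_def .
qed

lemma (in group) card_orbit_rcos_prime_power:
  assumes fin: "finite (carrier G)" and B: "B \<lhd> G" and a: "a \<in> carrier G"
    and pow_central: "\<And>g. g \<in> carrier G \<Longrightarrow> g [^] n \<otimes> a \<otimes> inv (g [^] n) \<otimes> inv a \<in> B"
    and n: "\<And>q. Factorial_Ring.prime q \<Longrightarrow> q dvd n \<Longrightarrow> q = p"
  shows "card (orbit G (subset_conj G) (B #> a)) = 1 \<or> p dvd card (orbit G (subset_conj G) (B #> a))"
proof (cases "card (orbit G (subset_conj G) (B #> a)) = 1")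
  case False
  interpret B: normal B G using B .
  obtain q where q: "Factorial_Ring.prime q" "q dvd card (orbit G (subset_conj G) (B #> a))"
    using prime_factor_nat[OF False] by blast
  have "subset_conj G (g [^] n) (B #> a) = B #> a" if "g \<in> carrier G" for g
    using B.subset_conj_rcos[of "g [^] n" a] rcos_eq_iff[OF B.subgroup_axioms]
      pow_central[OF that] that a by simp
  then have "q dvd n"
    using prime_dvd_card_orbit_dvd[OF fin group_action_subset_conj _ _ q]
      r_coset_subset_G[OF B.subset a] by blast
  then show ?thesis
    using n q by blast
qed simp

lemma (in group) exists_central_mod_outside:
  assumes fin: "finite (carrier G)" and A: "A \<lhd> G" and B: "B \<lhd> G" "B \<subseteq> A"
    and p: "Factorial_Ring.prime p" "p dvd card ((\<lambda>a. B #> a) ` A)"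
    and pow_central: "\<And>g a. g \<in> carrier G \<Longrightarrow> a \<in> A \<Longrightarrow> g [^] n \<otimes> a \<otimes> inv (g [^] n) \<otimes> inv a \<in> B"
    and n: "\<And>q. Factorial_Ring.prime q \<Longrightarrow> q dvd n \<Longrightarrow> q = p"
  shows "\<exists>a\<in>A. a \<notin> B \<and> (\<forall>g\<in>carrier G. g \<otimes> a \<otimes> inv g \<otimes> inv a \<in> B)"
proof -
  interpret A: normal A G using A .
  interpret B: normal B G using B(1) .
  interpret act: group_action G "{S. S \<subseteq> carrier G}" "subset_conj G"
    by (rule group_action_subset_conj)
  define Y where "Y = (\<lambda>a. B #> a) ` A"
  define F where "F = {S \<in> Y. card (orbit G (subset_conj G) S) = 1}"
  have "finite Y"
    using finite_subset[OF A.subset fin] unfolding Y_def by simp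
  moreover have "Y \<subseteq> {S. S \<subseteq> carrier G}"
    using A.subset r_coset_subset_G[OF B.subset] unfolding Y_def by blast
  moreover have "orbit G (subset_conj G) S \<subseteq> Y" if "S \<in> Y" for S
    using that B.orbit_subset_conj_rcos A.inv_op_closed2 A.subset unfolding Y_def by auto
  moreover have "card (orbit G (subset_conj G) S) = 1 \<or> p dvd card (orbit G (subset_conj G) S)"
    if "S \<in> Y" for S
    using that card_orbit_rcos_prime_power[OF fin B(1) _ pow_central n] A.subset
    unfolding Y_def by blast
  ultimately have "card F mod p = card Y mod p"
    unfolding F_def by (rule act.card_fixed_points_mod)
  then have "p dvd card F"
    using p(2) unfolding Y_def by (simp add: dvd_eq_mod_eq_0)
  moreover have "B \<in> F"
  proof -
    have "B = B #> \<one>" "\<one> \<in> A"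
      using B.subset by simp_all
    then show ?thesis
      using B.card_orbit_subset_conj_rcos_eq_1_iff[of \<one>] B.one_closed unfolding F_def Y_def by force
  qed
  moreover have "finite F"
    using \<open>finite Y\<close> unfolding F_def by simp
  ultimately have "card F \<ge> p"
    using dvd_imp_le[of p "card F"] card_gt_0_iff[of F] by auto
  then have "\<not> F \<subseteq> {B}"
    using prime_gt_1_nat[OF p(1)] card_mono[of "{B}" F] by auto
  then obtain a where a: "a \<in> A" "B #> a \<noteq> B" "card (orbit G (subset_conj G) (B #> a)) = 1"
    unfolding F_def Y_def by blast
  moreover have "a \<in> carrier G"
    using a(1) A.subset by blast
  ultimately show ?thesis
    using B.card_orbit_subset_conj_rcos_eq_1_iff coset_join2[OF _ B.subgroup_axioms] by blast
qed

lemma (in group) commutator_mem_derived: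
  assumes "a \<in> H" "b \<in> H"
  shows "a \<otimes> b \<otimes> inv a \<otimes> inv b \<in> derived G H"
  using assms unfolding derived_def by (intro generate.incl) blast

lemma (in group) normal_set_mult_maximal_eq_carrier:
  assumes "maximal_subgroup G M" "A \<lhd> G" "\<not> A \<subseteq> M"
  shows "A <#> M = carrier G"
proof -
  interpret A: normal A G using assms(2) .
  have M: "subgroup M G"
    using assms(1) unfolding maximal_subgroup_def by blast
  interpret second_isomorphism_grp A G M
    using assms(2) M by (simp add: second_isomorphism_grp_def second_isomorphism_grp_axioms_def)
  have "M = {\<one>} <#> M" "A = A <#> {\<one>}"
    using M A.subset subgroup.subset lcos_mult_one coset_mult_one
    by (metis l_coset_eq_set_mult r_coset_eq_set_mult)+
  then have "M \<subseteq> A <#> M" "A \<subseteq> A <#> M"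
    using M A.one_closed subgroup.one_closed mono_set_mult
    by (metis empty_subsetI insert_subset subset_refl)+
  moreover have "A <#> M \<noteq> M"
    using \<open>A \<subseteq> A <#> M\<close> assms(3) by blast
  ultimately show ?thesis
    using assms(1) normal_set_mult_subgroup unfolding maximal_subgroup_def by blast
qed

lemma (in group) set_mult_memE:
  assumes "x \<in> A <#> M"
  obtains a m where "a \<in> A" "m \<in> M" "x = a \<otimes> m"
  using assms unfolding set_mult_def by blast

lemma (in group) normal_inter_if_derived_subset:
  assumes A: "A \<lhd> G" and M: "subgroup M G" and AM: "A <#> M = carrier G"
    and derived: "derived G A \<subseteq> M"
  shows "A \<inter> M \<lhd> G"
proof -
  interpret A: normal A G using A .
  have "g \<otimes> b \<otimes> inv g \<in> A \<inter> M" if g: "g \<in> carrier G" and b: "b \<in> A \<inter> M" for g b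
  proof -
    obtain a m where am: "a \<in> A" "m \<in> M" "g = a \<otimes> m"
      using g AM set_mult_memE by blast
    have carrier: "a \<in> carrier G" "m \<in> carrier G" "b \<in> carrier G"
      using am b A.subset subgroup.subset[OF M] by auto
    define c where "c = m \<otimes> b \<otimes> inv m"
    have c: "c \<in> A" "c \<in> M" "c \<in> carrier G"
      using b am(2) M A.inv_op_closed2 carrier unfolding c_def
      by (auto intro: subgroup.m_closed subgroup.m_inv_closed)
    have "g \<otimes> b \<otimes> inv g = (a \<otimes> c \<otimes> inv a \<otimes> inv c) \<otimes> c"
      unfolding am(3) c_def using carrier by (simp add: inv_mult_group m_assoc)
    moreover have "a \<otimes> c \<otimes> inv a \<otimes> inv c \<in> M"
      using commutator_mem_derived[OF am(1) c(1)] derived by blast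
    ultimately have "g \<otimes> b \<otimes> inv g \<in> M"
      using subgroup.m_closed[OF M _ c(2)] by simp
    then show ?thesis
      using A.inv_op_closed2[OF g] b by blast
  qed
  then show ?thesis
    using normal_inv_iff subgroups_Inter_pair[OF A.subgroup_axioms M] by blast
qed

lemma card_image_eq_if_same_fibres:
  assumes "\<And>x y. x \<in> A \<Longrightarrow> y \<in> A \<Longrightarrow> f x = f y \<longleftrightarrow> g x = g y"
  shows "card (f ` A) = card (g ` A)"
proof -
  define h where "h = (\<lambda>S. g (inv_into A f S))"
  have h: "h (f a) = g a" if "a \<in> A" for a
    using assms[of "inv_into A f (f a)" a] that inv_into_into[of "f a" f A] f_inv_into_f[of "f a" f A]
    unfolding h_def by auto
  then have "h ` f ` A = g ` A"
    by (auto simp: image_iff)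
  moreover have "inj_on h (f ` A)"
    using h assms by (auto simp: inj_on_def)
  ultimately show ?thesis
    using card_image by fastforce
qed

lemma (in group) rcosets_eq_image_if_set_mult_eq_carrier:
  assumes A: "subgroup A G" and M: "subgroup M G" and AM: "A <#> M = carrier G"
  shows "rcosets M = (\<lambda>a. M #> a) ` A"
proof
  show "(\<lambda>a. M #> a) ` A \<subseteq> rcosets M"
    using A M subgroup.subset by (auto intro: rcosetsI)
  show "rcosets M \<subseteq> (\<lambda>a. M #> a) ` A"
  proof
    fix S assume "S \<in> rcosets M"
    then obtain g where g: "g \<in> carrier G" "S = M #> g"
      unfolding RCOSETS_def by blast
    then obtain a m where am: "a \<in> A" "m \<in> M" "inv g = a \<otimes> m"
      using AM set_mult_memE inv_closed by metis
    have carrier: "a \<in> carrier G" "m \<in> carrier G"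
      using subgroup.mem_carrier[OF A am(1)] subgroup.mem_carrier[OF M am(2)] by auto
    then have "g = inv m \<otimes> inv a"
      using am(3) g(1) by (metis inv_inv inv_mult_group)
    then have "g \<otimes> inv (inv a) = inv m"
      using carrier by (simp add: m_assoc)
    then have "M #> g = M #> inv a"
      using rcos_eq_iff[OF M g(1) inv_closed[OF carrier(1)]] subgroup.m_inv_closed[OF M am(2)]
      by simp
    then show "S \<in> (\<lambda>a. M #> a) ` A"
      using g(2) subgroup.m_inv_closed[OF A am(1)] by blast
  qed
qed

lemma (in group) card_rcosets_eq_card_rcosets_inter:
  assumes A: "subgroup A G" and M: "subgroup M G" and AM: "A <#> M = carrier G"
  shows "card (rcosets M) = card ((\<lambda>a. (A \<inter> M) #> a) ` A)"
proof -
  have "M #> x = M #> y \<longleftrightarrow> (A \<inter> M) #> x = (A \<inter> M) #> y" if "x \<in> A" "y \<in> A" for x y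
  proof -
    have xy: "x \<in> carrier G" "y \<in> carrier G"
      using that subgroup.mem_carrier[OF A] by auto
    have "x \<otimes> inv y \<in> A"
      using that subgroup.m_closed[OF A] subgroup.m_inv_closed[OF A] by blast
    then show ?thesis
      using rcos_eq_iff[OF M xy] rcos_eq_iff[OF subgroups_Inter_pair[OF A M] xy] by simp
  qed
  then show ?thesis
    unfolding rcosets_eq_image_if_set_mult_eq_carrier[OF assms]
    by (rule card_image_eq_if_same_fibres)
qed

lemma (in normal) rcos_nat_pow_mult:
  assumes "a \<in> carrier G" "b \<in> carrier G" "a \<otimes> b \<otimes> inv a \<otimes> inv b \<in> H"
  shows "H #> ((a \<otimes> b) [^] (n::nat)) = H #> (a [^] n \<otimes> b [^] n)"
proof -
  interpret Q: group "G Mod H"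
    by (rule factorgroup_is_group)
  interpret h: group_hom G "G Mod H" "\<lambda>x. H #> x"
    using r_coset_hom_Mod by (simp add: group_hom_def group_hom_axioms_def is_group Q.is_group)
  have "a \<otimes> b \<otimes> inv (b \<otimes> a) = a \<otimes> b \<otimes> inv a \<otimes> inv b"
    using assms by (simp add: inv_mult_group m_assoc)
  then have ab: "H #> (a \<otimes> b) = H #> (b \<otimes> a)"
    using assms by (intro iffD2[OF rcos_eq_iff[OF subgroup_axioms]]) auto
  have "H #> ((a \<otimes> b) [^] n) = (H #> (a \<otimes> b)) [^]\<^bsub>G Mod H\<^esub> n"
    using assms by (simp add: h.hom_nat_pow)
  also have "\<dots> = ((H #> a) \<otimes>\<^bsub>G Mod H\<^esub> (H #> b)) [^]\<^bsub>G Mod H\<^esub> n"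
    using assms by (simp add: h.hom_mult)
  also have "\<dots> = (H #> a) [^]\<^bsub>G Mod H\<^esub> n \<otimes>\<^bsub>G Mod H\<^esub> (H #> b) [^]\<^bsub>G Mod H\<^esub> n"
  proof (rule Q.pow_mult_distrib)
    show "(H #> a) \<otimes>\<^bsub>G Mod H\<^esub> (H #> b) = (H #> b) \<otimes>\<^bsub>G Mod H\<^esub> (H #> a)"
      using ab h.hom_mult[OF assms(1,2)] h.hom_mult[OF assms(2,1)] by (simp only:)
  qed (use assms in simp_all)
  also have "\<dots> = H #> (a [^] n \<otimes> b [^] n)"
    using assms by (simp add: h.hom_mult flip: h.hom_nat_pow)
  finally show ?thesis .
qed

lemma (in group) normal_nat_pow_mem:
  assumes A: "A \<lhd> G" and B: "B \<lhd> G" and derived: "derived G A \<subseteq> B"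
  shows "{a \<in> A. a [^] (n::nat) \<in> B} \<lhd> G"
proof -
  interpret A: normal A G using A .
  interpret B: normal B G using B .
  have "subgroup {a \<in> A. a [^] n \<in> B} G"
  proof (rule subgroupI)
    show "{a \<in> A. a [^] n \<in> B} \<subseteq> carrier G"
      using A.subset by auto
    have "\<one> \<in> {a \<in> A. a [^] n \<in> B}"
      using A.one_closed B.one_closed by simp
    then show "{a \<in> A. a [^] n \<in> B} \<noteq> {}"
      by blast
  next
    fix a assume "a \<in> {a \<in> A. a [^] n \<in> B}"
    then show "inv a \<in> {a \<in> A. a [^] n \<in> B}"
      using A.subset nat_pow_inv by (auto simp: subset_iff)
  next
    fix a b assume a: "a \<in> {a \<in> A. a [^] n \<in> B}" and b: "b \<in> {a \<in> A. a [^] n \<in> B}"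
    then have carrier: "a \<in> carrier G" "b \<in> carrier G"
      using A.subset by auto
    have "B #> ((a \<otimes> b) [^] n) = B #> (a [^] n \<otimes> b [^] n)"
      using B.rcos_nat_pow_mult[OF carrier] commutator_mem_derived a b derived by blast
    also have "\<dots> = B"
      using a b carrier coset_join2 B.subgroup_axioms by simp
    finally have "(a \<otimes> b) [^] n \<in> B"
      using coset_join1 carrier B.subgroup_axioms by blast
    then show "a \<otimes> b \<in> {a \<in> A. a [^] n \<in> B}"
      using a b by simp
  qed
  moreover have "g \<otimes> a \<otimes> inv g \<in> {a \<in> A. a [^] n \<in> B}"
    if "g \<in> carrier G" "a \<in> {a \<in> A. a [^] n \<in> B}" for g a
    using that A.inv_op_closed2 B.inv_op_closed2 conj_nat_pow A.subset by auto
  ultimately show ?thesis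
    using normal_inv_iff by blast
qed

lemma (in normal) commutator_inv_mem:
  assumes "g \<in> carrier G" "a \<in> carrier G" "g \<otimes> a \<otimes> inv g \<otimes> inv a \<in> H"
  shows "g \<otimes> inv a \<otimes> inv g \<otimes> inv (inv a) \<in> H"
proof -
  have "g \<otimes> inv a \<otimes> inv g \<otimes> inv (inv a) = inv a \<otimes> inv (g \<otimes> a \<otimes> inv g \<otimes> inv a) \<otimes> a"
    using assms by (simp add: inv_mult_group m_assoc)
  then show ?thesis
    using assms inv_op_closed1 m_inv_closed by simp
qed

lemma (in normal) commutator_mult_mem:
  assumes "g \<in> carrier G" "a \<in> carrier G" "b \<in> carrier G"
    and "g \<otimes> a \<otimes> inv g \<otimes> inv a \<in> H" "g \<otimes> b \<otimes> inv g \<otimes> inv b \<in> H"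
  shows "g \<otimes> (a \<otimes> b) \<otimes> inv g \<otimes> inv (a \<otimes> b) \<in> H"
proof -
  have "g \<otimes> (a \<otimes> b) \<otimes> inv g \<otimes> inv (a \<otimes> b)
          = (g \<otimes> a \<otimes> inv g \<otimes> inv a) \<otimes> (a \<otimes> (g \<otimes> b \<otimes> inv g \<otimes> inv b) \<otimes> inv a)"
    using assms by (simp add: inv_mult_group m_assoc)
  then show ?thesis
    using assms inv_op_closed2 m_closed by simp
qed

lemma (in normal) commutator_conj_mem:
  assumes "g \<in> carrier G" "k \<in> carrier G" "a \<in> carrier G"
    and "(inv k \<otimes> g \<otimes> k) \<otimes> a \<otimes> inv (inv k \<otimes> g \<otimes> k) \<otimes> inv a \<in> H"
  shows "g \<otimes> (k \<otimes> a \<otimes> inv k) \<otimes> inv g \<otimes> inv (k \<otimes> a \<otimes> inv k) \<in> H"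
proof -
  have "g \<otimes> (k \<otimes> a \<otimes> inv k) \<otimes> inv g \<otimes> inv (k \<otimes> a \<otimes> inv k)
          = k \<otimes> ((inv k \<otimes> g \<otimes> k) \<otimes> a \<otimes> inv (inv k \<otimes> g \<otimes> k) \<otimes> inv a) \<otimes> inv k"
    using assms by (simp add: inv_mult_group m_assoc)
  then show ?thesis
    using assms inv_op_closed2 by simp
qed

lemma (in group) normal_commutator_mem:
  assumes A: "A \<lhd> G" and B: "B \<lhd> G"
  shows "{a \<in> A. \<forall>g\<in>carrier G. g \<otimes> a \<otimes> inv g \<otimes> inv a \<in> B} \<lhd> G"
    (is "?C \<lhd> G")
proof -
  interpret A: normal A G using A .
  interpret B: normal B G using B .
  have "subgroup ?C G"
  proof (rule subgroupI)
    show "?C \<subseteq> carrier G"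
      using A.subset by auto
    have "\<one> \<in> ?C"
      using A.one_closed B.one_closed by simp
    then show "?C \<noteq> {}"
      by blast
  next
    fix a assume "a \<in> ?C"
    then show "inv a \<in> ?C"
      using B.commutator_inv_mem A.subset by auto
  next
    fix a b assume "a \<in> ?C" "b \<in> ?C"
    then show "a \<otimes> b \<in> ?C"
      using B.commutator_mult_mem A.subset by auto
  qed
  moreover have "k \<otimes> a \<otimes> inv k \<in> ?C" if "k \<in> carrier G" "a \<in> ?C" for k a
    using that B.commutator_conj_mem A.inv_op_closed2 A.subset by auto
  ultimately show ?thesis
    using normal_inv_iff by blast
qed

lemma (in group) normal_if_commutators_mem:
  assumes A: "subgroup A G" and M: "subgroup M G" and AM: "A <#> M = carrier G"
    and comm: "\<And>a g. a \<in> A \<Longrightarrow> g \<in> carrier G \<Longrightarrow> g \<otimes> a \<otimes> inv g \<otimes> inv a \<in> M"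
  shows "M \<lhd> G"
proof -
  have "g \<otimes> m \<otimes> inv g \<in> M" if g: "g \<in> carrier G" and m: "m \<in> M" for g m
  proof -
    obtain a m' where am: "a \<in> A" "m' \<in> M" "g = a \<otimes> m'"
      using g AM set_mult_memE by blast
    define k where "k = m' \<otimes> m \<otimes> inv m'"
    have k: "k \<in> M" "k \<in> carrier G"
      using am(2) m M unfolding k_def
      by (auto intro: subgroup.m_closed subgroup.m_inv_closed subgroup.mem_carrier)
    have carrier: "a \<in> carrier G" "m' \<in> carrier G" "m \<in> carrier G"
      using am(1,2) m subgroup.mem_carrier[OF A] subgroup.mem_carrier[OF M] by auto
    have "g \<otimes> m \<otimes> inv g = k \<otimes> (inv k \<otimes> a \<otimes> inv (inv k) \<otimes> inv a)"
      unfolding am(3) k_def using carrier by (simp add: inv_mult_group m_assoc)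
    then show ?thesis
      using comm[OF am(1) inv_closed[OF k(2)]] subgroup.m_closed[OF M k(1)] by simp
  qed
  then show ?thesis
    using normal_inv_iff M by blast
qed

lemma (in group) nat_pow_commutator_mem:
  assumes A: "A \<lhd> G" and M: "subgroup M G" and pow: "\<And>x. x \<in> carrier G \<Longrightarrow> x [^] (n::nat) \<in> M"
    and "g \<in> carrier G" "a \<in> A"
  shows "g [^] n \<otimes> a \<otimes> inv (g [^] n) \<otimes> inv a \<in> A \<inter> M"
proof -
  interpret A: normal A G using A .
  have carrier: "a \<in> carrier G" "g [^] n \<in> carrier G"
    using assms A.subset by auto
  have "g [^] n \<otimes> a \<otimes> inv (g [^] n) \<otimes> inv a = g [^] n \<otimes> inv ((a \<otimes> g \<otimes> inv a) [^] n)"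
    unfolding conj_nat_pow[OF carrier(1) \<open>g \<in> carrier G\<close>]
    using carrier \<open>g \<in> carrier G\<close> by (simp add: inv_mult_group m_assoc)
  then have "g [^] n \<otimes> a \<otimes> inv (g [^] n) \<otimes> inv a \<in> M"
    using pow carrier \<open>g \<in> carrier G\<close> M
    by (simp add: subgroup.m_closed subgroup_nat_pow_closed subgroup.m_inv_closed)
  moreover have "g [^] n \<otimes> a \<otimes> inv (g [^] n) \<otimes> inv a \<in> A"
    using A.inv_op_closed2[OF carrier(2) \<open>a \<in> A\<close>] A.m_closed A.m_inv_closed \<open>a \<in> A\<close> by blast
  ultimately show ?thesis
    by blast
qed

lemma (in group) card_rcosets_ne_1:
  assumes "finite (carrier G)" "subgroup H G" "H \<noteq> carrier G"
  shows "card (rcosets H) \<noteq> 1"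
proof
  assume "card (rcosets H) = 1"
  then have "card H = card (carrier G)"
    using lagrange[OF assms(2)] by (simp add: order_def)
  then show False
    using card_subset_eq[OF assms(1) subgroup.subset[OF assms(2)]] assms(3) by simp
qed

locale minimal_normal_outside = group G for G (structure) +
  fixes M A :: "'a set"
  assumes subgroup_M: "subgroup M G"
    and normal_A: "A \<lhd> G"
    and not_subset: "\<not> A \<subseteq> M"
    and minimal: "\<And>K. K \<lhd> G \<Longrightarrow> K \<subseteq> A \<Longrightarrow> \<not> K \<subseteq> M \<Longrightarrow> K = A"

lemma (in group) exists_minimal_normal_outside:
  assumes fin: "finite (carrier G)" and M: "subgroup M G" "M \<noteq> carrier G"
  obtains A where "minimal_normal_outside G M A"
proof -
  define S where "S = {K. K \<lhd> G \<and> \<not> K \<subseteq> M}"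
  have "carrier G \<in> S"
    using normal_self M subgroup.subset unfolding S_def by blast
  then obtain A where A: "A \<in> S" and least: "\<And>K. K \<in> S \<Longrightarrow> card A \<le> card K"
    using ex_has_least_nat[of "\<lambda>K. K \<in> S" "carrier G" card] by blast
  have "K = A" if "K \<lhd> G" "K \<subseteq> A" "\<not> K \<subseteq> M" for K
  proof -
    have "A \<subseteq> carrier G"
      using A normal_imp_subgroup subgroup.subset unfolding S_def by blast
    then have "finite A"
      using fin by (rule finite_subset)
    moreover have "card A \<le> card K"
      using least that unfolding S_def by blast
    ultimately show ?thesis
      using card_seteq[OF _ that(2)] by blast
  qed
  then have "minimal_normal_outside G M A"
    using A M(1) is_group
    unfolding S_def minimal_normal_outside_def minimal_normal_outside_axioms_def by blast
  then show ?thesis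
    by (rule that)
qed

context minimal_normal_outside
begin

lemma derived_subset:
  assumes "solvable G"
  shows "derived G A \<subseteq> M"
proof (rule ccontr)
  assume not_derived: "\<not> derived G A \<subseteq> M"
  have "(derived G ^^ j) A = A" for j
  proof (induction j)
    case (Suc j)
    have "derived G A \<lhd> G" "derived G A \<subseteq> A"
      using derived_is_normal[OF normal_A] derived_incl[OF _ normal_imp_subgroup[OF normal_A]] by auto
    then show ?case
      using Suc minimal not_derived by simp
  qed simp
  moreover obtain k where "(derived G ^^ k) (carrier G) = {\<one>}"
    using assms solvable_iff_trivial_derived_seq by blast
  moreover have "(derived G ^^ k) A \<subseteq> (derived G ^^ k) (carrier G)"
    using mono_exp_of_derived[OF subgroup.subset[OF normal_imp_subgroup[OF normal_A]]] .
  ultimately have "A \<subseteq> {\<one>}"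
    by simp
  then show False
    using not_subset subgroup.one_closed[OF subgroup_M] by blast
qed

lemma nat_pow_prime_mem_inter:
  assumes fin: "finite (carrier G)" and derived: "derived G A \<subseteq> M" and B: "A \<inter> M \<lhd> G"
    and p: "Factorial_Ring.prime p" "p dvd card ((\<lambda>a. (A \<inter> M) #> a) ` A)"
    and "a \<in> A"
  shows "a [^] p \<in> A \<inter> M"
proof -
  have "derived G A \<subseteq> A \<inter> M"
    using derived derived_incl[OF _ normal_imp_subgroup[OF normal_A]] by blast
  then have K: "{a \<in> A. a [^] p \<in> A \<inter> M} \<lhd> G"
    using normal_nat_pow_mem[OF normal_A B] by blast
  obtain x where "x \<in> A" "x \<notin> A \<inter> M" "x [^] p \<in> A \<inter> M"
    using exists_nat_pow_prime_mem[OF fin normal_imp_subgroup[OF normal_A] normal_imp_subgroup[OF B] _ p]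
    by blast
  then have "\<not> {a \<in> A. a [^] p \<in> A \<inter> M} \<subseteq> M"
    by blast
  then have "{a \<in> A. a [^] p \<in> A \<inter> M} = A"
    using minimal[OF K] by blast
  then show ?thesis
    using \<open>a \<in> A\<close> by blast
qed

lemma commutator_mem_if_central_mod_inter:
  assumes B: "A \<inter> M \<lhd> G" and "a\<^sub>0 \<in> A" "a\<^sub>0 \<notin> M"
    and central: "\<And>g. g \<in> carrier G \<Longrightarrow> g \<otimes> a\<^sub>0 \<otimes> inv g \<otimes> inv a\<^sub>0 \<in> A \<inter> M"
    and "a \<in> A" "g \<in> carrier G"
  shows "g \<otimes> a \<otimes> inv g \<otimes> inv a \<in> M"
proof -
  define C where "C = {a \<in> A. \<forall>g\<in>carrier G. g \<otimes> a \<otimes> inv g \<otimes> inv a \<in> A \<inter> M}"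
  have "C \<lhd> G"
    using normal_commutator_mem[OF normal_A B] unfolding C_def .
  moreover have "\<not> C \<subseteq> M"
    using assms(2,3) central unfolding C_def by blast
  ultimately have "C = A"
    using minimal unfolding C_def by blast
  then show ?thesis
    using assms(5,6) unfolding C_def by blast
qed

lemma normal_if_exponential_maximal:
  assumes fin: "finite (carrier G)" and "solvable G"
    and max: "maximal_subgroup G M" and exp: "exponential_subgroup G M"
  shows "M \<lhd> G"
proof -
  interpret A: normal A G by (rule normal_A)
  have derived: "derived G A \<subseteq> M"
    using derived_subset[OF \<open>solvable G\<close>] .
  have AM: "A <#> M = carrier G"
    using normal_set_mult_maximal_eq_carrier[OF max normal_A not_subset] .
  have B: "A \<inter> M \<lhd> G"
    using normal_inter_if_derived_subset[OF normal_A subgroup_M AM derived] .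
  define n where "n = card (rcosets M)"
  have n: "n = card ((\<lambda>a. (A \<inter> M) #> a) ` A)"
    unfolding n_def using card_rcosets_eq_card_rcosets_inter[OF A.subgroup_axioms subgroup_M AM] .
  have "n \<noteq> 1"
    using card_rcosets_ne_1[OF fin subgroup_M] max unfolding n_def maximal_subgroup_def by blast
  then obtain p where p: "Factorial_Ring.prime p" "p dvd n"
    using prime_factor_nat by blast
  have pow_p: "a [^] p \<in> A \<inter> M" if "a \<in> A" for a
    using nat_pow_prime_mem_inter[OF fin derived B p(1)] p(2) n that by simp
  have only_p: "q = p" if q: "Factorial_Ring.prime q" "q dvd n" for q
  proof -
    have "q dvd p"
      using prime_dvd_index_dvd_exponent[OF fin A.subgroup_axioms normal_imp_subgroup[OF B]
          Int_lower1 pow_p q(1)] q(2) n by simp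
    then show ?thesis
      using q(1) p(1) primes_dvd_imp_eq by blast
  qed
  have pow_n: "x [^] n \<in> M" if "x \<in> carrier G" for x
    using exp that unfolding exponential_subgroup_def n_def by blast
  obtain a\<^sub>0 where a\<^sub>0: "a\<^sub>0 \<in> A" "a\<^sub>0 \<notin> A \<inter> M"
    "\<forall>g\<in>carrier G. g \<otimes> a\<^sub>0 \<otimes> inv g \<otimes> inv a\<^sub>0 \<in> A \<inter> M"
    using exists_central_mod_outside[OF fin normal_A B Int_lower1 p(1) p(2)[unfolded n]
        nat_pow_commutator_mem[OF normal_A subgroup_M pow_n] only_p]
    by blast
  have "g \<otimes> a \<otimes> inv g \<otimes> inv a \<in> M" if "a \<in> A" "g \<in> carrier G" for a g
    using commutator_mem_if_central_mod_inter[OF B a\<^sub>0(1) _ _ that] a\<^sub>0 by blast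
  then show ?thesis
    using normal_if_commutators_mem[OF A.subgroup_axioms subgroup_M AM] by blast
qed

end


theorem corollary4p5:
  fixes G :: "('a, 'b) monoid_scheme" and M :: "'a set"
  assumes "group G" and "finite (carrier G)" and "solvable G"
    and "maximal_subgroup G M"
    and "exponential_subgroup G M"
  shows "M \<lhd> G"
proof -
  interpret group G by (rule assms(1))
  have "subgroup M G" "M \<noteq> carrier G"
    using assms(4) unfolding maximal_subgroup_def by auto
  then obtain A where "minimal_normal_outside G M A"
    using exists_minimal_normal_outside[OF assms(2)] by metis
  then show ?thesis
    using minimal_normal_outside.normal_if_exponential_maximal assms(2-5) by metis
qed

end
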